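(* Let $V$ be a complex vector space of finite dimension $N$, let $(R,F)$ be a couple of compatible braidings on $V\otimes V$ with $F$ an involutive symmetry. Let $r(u,v)$ be either the braided rational $r$-matrix $r(u,v)=\frac{F}{u-v}$, or the braided trigonometric $r$-matrix $r(u,v)=\frac{F\,u}{u-v}-\frac{r}{2}$, where in the latter case $R=R(q)$ is a family of Hecke symmetries analytic in $q$ near $1$, compatible with $F$ for each $q$, with $R(1)=F$, and $r$ is defined by $R(q)F=I+h\,r+O(h^2)$, $q=e^h$. Then for any $N\times N$ matrix $A$ and any pairwise distinct positive integers $i,j,k$, $$ r_{\overline{ij}}(u,v)\,A_{\overline k}=A_{\overline k}\,r_{\overline{ij}}(u,v).$$
   Context: A braiding is an invertible $R\in\mathrm{End}(V\otimes V)$ with $(R\otimes I)(I\otimes R)(R\otimes I)=(I\otimes R)(R\otimes I)(I\otimes R)$; involutive symmetry: $R^2=I$; Hecke symmetry: $(R-qI)(R+q^{-1}I)=0$, $q\ne\pm1$. $X_{k,k+1}$ is $X$ acting on factors $k,k+1$ of $V^{\otimes n}$; $A_1=A\otimes I\otimes\cdots\otimes I$. Compatibility: $R_{12}F_{23}F_{12}=F_{23}F_{12}R_{23}$, $R_{23}F_{12}F_{23}=F_{12}F_{23}R_{12}$. Overlined indices: $A_{\overline 1}=A_1$, $A_{\overline{k+1}}=F_{k,k+1}A_{\overline k}F_{k,k+1}^{-1}$; for $X\in\mathrm{End}(V\otimes V)$ and $k<l$, $X_{\overline{kl}}=(F_{k-1,k}\cdots F_{12})(F_{l-1,l}\cdots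 F_{23})X_{12}(F_{23}^{-1}\cdots F_{l-1,l}^{-1})(F_{12}^{-1}\cdots F_{k-1,k}^{-1})$ and $X_{\overline{lk}}:=(FXF)_{\overline{kl}}$; for parameter-dependent $X(u,v)$ this is applied for fixed $(u,v)$. *)

theory Defs
  imports "HOL-Analysis.Analysis" "HOL-Library.Landau_Symbols"
begin

text \<open>V = C^N with its standard basis.  An operator on V^(tensor n) is given by its
matrix entries indexed by multi-indices: lists of length n with entries < N.
Only entries at valid multi-indices matter; equality of operators is checked there.\<close>

type_synonym op = "nat list \<Rightarrow> nat list \<Rightarrow> complex"

definition midx :: "nat \<Rightarrow> nat \<Rightarrow> nat list set" where
  "midx N n = {xs. length xs = n \<and> (\<forall>x\<in>set xs. x < N)}"

definition opeq :: "nat \<Rightarrow> nat \<Rightarrow> op \<Rightarrow> op \<Rightarrow> bool" where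
  "opeq N n X Y \<longleftrightarrow> (\<forall>a\<in>midx N n. \<forall>b\<in>midx N n. X a b = Y a b)"

definition opmul :: "nat \<Rightarrow> nat \<Rightarrow> op \<Rightarrow> op \<Rightarrow> op" where
  "opmul N n X Y = (\<lambda>a c. \<Sum>b\<in>midx N n. X a b * Y b c)"

definition opid :: "nat \<Rightarrow> nat \<Rightarrow> op" where
  "opid N n = (\<lambda>a b. if a \<in> midx N n \<and> a = b then 1 else 0)"

definition opadd :: "op \<Rightarrow> op \<Rightarrow> op" where
  "opadd X Y = (\<lambda>a b. X a b + Y a b)"

definition opsmul :: "complex \<Rightarrow> op \<Rightarrow> op" where
  "opsmul c X = (\<lambda>a b. c * X a b)"

definition emb1 :: "nat \<Rightarrow> nat \<Rightarrow> (nat \<Rightarrow> nat \<Rightarrow> complex) \<Rightarrow> op" where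
  "emb1 N n A = (\<lambda>a b. if a \<in> midx N n \<and> b \<in> midx N n \<and> (\<forall>m. 1 \<le> m \<and> m < n \<longrightarrow> a!m = b!m)
      then A (a!0) (b!0) else 0)"

text \<open>X_{k,k+1}: X \<in> End(V\<otimes>V) acting on factors k, k+1 (1-based) of V^(tensor n).\<close>
definition emb2 :: "nat \<Rightarrow> nat \<Rightarrow> nat \<Rightarrow> op \<Rightarrow> op" where
  "emb2 N n k X = (\<lambda>a b. if a \<in> midx N n \<and> b \<in> midx N n \<and>
        (\<forall>m<n. m \<noteq> k - 1 \<and> m \<noteq> k \<longrightarrow> a!m = b!m)
      then X [a!(k-1), a!k] [b!(k-1), b!k] else 0)"

definition braiding :: "nat \<Rightarrow> op \<Rightarrow> bool" where
  "braiding N R \<longleftrightarrow>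
     (\<exists>S. opeq N 2 (opmul N 2 R S) (opid N 2) \<and> opeq N 2 (opmul N 2 S R) (opid N 2)) \<and>
     opeq N 3 (opmul N 3 (opmul N 3 (emb2 N 3 1 R) (emb2 N 3 2 R)) (emb2 N 3 1 R))
              (opmul N 3 (opmul N 3 (emb2 N 3 2 R) (emb2 N 3 1 R)) (emb2 N 3 2 R))"

definition involutive_symmetry :: "nat \<Rightarrow> op \<Rightarrow> bool" where
  "involutive_symmetry N R \<longleftrightarrow> braiding N R \<and> opeq N 2 (opmul N 2 R R) (opid N 2)"

definition hecke_symmetry :: "nat \<Rightarrow> complex \<Rightarrow> op \<Rightarrow> bool" where
  "hecke_symmetry N q R \<longleftrightarrow> braiding N R \<and> q \<noteq> 1 \<and> q \<noteq> -1 \<and>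
     opeq N 2 (opmul N 2 (opadd R (opsmul (-q) (opid N 2))) (opadd R (opsmul (inverse q) (opid N 2))))
              (\<lambda>a b. 0)"

definition compatible :: "nat \<Rightarrow> op \<Rightarrow> op \<Rightarrow> bool" where
  "compatible N R F \<longleftrightarrow>
     opeq N 3 (opmul N 3 (opmul N 3 (emb2 N 3 1 R) (emb2 N 3 2 F)) (emb2 N 3 1 F))
              (opmul N 3 (opmul N 3 (emb2 N 3 2 F) (emb2 N 3 1 F)) (emb2 N 3 2 R)) \<and>
     opeq N 3 (opmul N 3 (opmul N 3 (emb2 N 3 2 R) (emb2 N 3 1 F)) (emb2 N 3 2 F))
              (opmul N 3 (opmul N 3 (emb2 N 3 1 F) (emb2 N 3 2 F)) (emb2 N 3 1 R))"

text \<open>Overlined single index: abar m = A_{overline(m+1)}; F^{-1} = F since F is involutive.\<close>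
primrec abar :: "nat \<Rightarrow> nat \<Rightarrow> op \<Rightarrow> (nat \<Rightarrow> nat \<Rightarrow> complex) \<Rightarrow> nat \<Rightarrow> op" where
  "abar N n F A 0 = emb1 N n A"
| "abar N n F A (Suc m) =
     opmul N n (opmul N n (emb2 N n (m+1) F) (abar N n F A m)) (emb2 N n (m+1) F)"

definition ovl1 :: "nat \<Rightarrow> nat \<Rightarrow> op \<Rightarrow> (nat \<Rightarrow> nat \<Rightarrow> complex) \<Rightarrow> nat \<Rightarrow> op" where
  "ovl1 N n F A k = abar N n F A (k - 1)"

text \<open>pl m = F_{m,m+1} ... F_{12} (i.e. the chain for k = m+1), pr m its inverse F_{12}...F_{m,m+1};
  ql m = F_{m+1,m+2} ... F_{23} (chain for l = m+2), qr m = F_{23} ... F_{m+1,m+2}.\<close>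
primrec pl :: "nat \<Rightarrow> nat \<Rightarrow> op \<Rightarrow> nat \<Rightarrow> op" where
  "pl N n F 0 = opid N n"
| "pl N n F (Suc m) = opmul N n (emb2 N n (m+1) F) (pl N n F m)"

primrec pr :: "nat \<Rightarrow> nat \<Rightarrow> op \<Rightarrow> nat \<Rightarrow> op" where
  "pr N n F 0 = opid N n"
| "pr N n F (Suc m) = opmul N n (pr N n F m) (emb2 N n (m+1) F)"

primrec ql :: "nat \<Rightarrow> nat \<Rightarrow> op \<Rightarrow> nat \<Rightarrow> op" where
  "ql N n F 0 = opid N n"
| "ql N n F (Suc m) = opmul N n (emb2 N n (m+2) F) (ql N n F m)"

primrec qr :: "nat \<Rightarrow> nat \<Rightarrow> op \<Rightarrow> nat \<Rightarrow> op" where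
  "qr N n F 0 = opid N n"
| "qr N n F (Suc m) = opmul N n (qr N n F m) (emb2 N n (m+2) F)"

definition xbar :: "nat \<Rightarrow> nat \<Rightarrow> op \<Rightarrow> op \<Rightarrow> nat \<Rightarrow> nat \<Rightarrow> op" where
  "xbar N n F X k l =
     opmul N n (opmul N n (opmul N n (opmul N n (pl N n F (k - 1)) (ql N n F (l - 2)))
        (emb2 N n 1 X)) (qr N n F (l - 2))) (pr N n F (k - 1))"

definition ovl2 :: "nat \<Rightarrow> nat \<Rightarrow> op \<Rightarrow> op \<Rightarrow> nat \<Rightarrow> nat \<Rightarrow> op" where
  "ovl2 N n F X i j = (if i < j then xbar N n F X i j
                       else xbar N n F (opmul N 2 (opmul N 2 F X) F) j i)"

end

theory Submission
  imports Defs
begin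

text \<open>Since \<open>F\<close> is an involutive braiding, the operators \<open>F\<^sub>k\<^sub>,\<^sub>k\<^sub>+\<^sub>1\<close> satisfy the Coxeter
  relations of the symmetric group, and the overlined \<open>A\<^sub>k\<close>, \<open>X\<^sub>k\<^sub>l\<close> are conjugates of
  \<open>A\<^sub>1\<close>, \<open>X\<^sub>1\<^sub>2\<close> by words in them. Conjugating by the word that moves the factors \<open>k, l\<close> to \<open>1, 2\<close>
  turns the overlined \<open>A\<^sub>m\<close>, \<open>m \<notin> {k, l}\<close>, into an overlined \<open>A\<^sub>m\<^sub>'\<close> with \<open>m' \<ge> 3\<close>, so it
  suffices that \<open>X\<^sub>1\<^sub>2\<close> commutes with these. By induction on \<open>m'\<close> this follows from the
  compatibility relation \<open>X\<^sub>1\<^sub>2 F\<^sub>2\<^sub>3 F\<^sub>1\<^sub>2 = F\<^sub>2\<^sub>3 F\<^sub>1\<^sub>2 X\<^sub>2\<^sub>3\<close>, since the overlined \<open>A\<^sub>3\<close> is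
  \<open>F\<^sub>2\<^sub>3 F\<^sub>1\<^sub>2 A\<^sub>1 F\<^sub>1\<^sub>2 F\<^sub>2\<^sub>3\<close> and \<open>A\<^sub>1\<close> commutes with \<open>X\<^sub>2\<^sub>3\<close>.

  Compatibility is linear, holds for \<open>F\<close>, is preserved by \<open>X \<mapsto> F X F\<close> (which enters
  \<open>X\<^sub>l\<^sub>k\<close> for \<open>l > k\<close>), and holds for \<open>R F\<close> whenever \<open>R\<close> is compatible with \<open>F\<close>. This
  settles the rational \<open>r\<close>-matrix, and the trigonometric one because \<open>r\<close> is the first-order
  coefficient of \<open>R(e\<^sup>h) F = I + h r + O(h\<^sup>2)\<close>, whose compatibility defect vanishes for all
  small \<open>h\<close>.\<close>

section \<open>Operators on \<open>V\<^sup>\<otimes>\<^sup>n\<close>\<close>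

lemma finite_midx [simp]: "finite (midx N n)"
proof -
  have "midx N n = {xs. set xs \<subseteq> {..<N} \<and> length xs = n}"
    unfolding midx_def by auto
  then show ?thesis using finite_lists_length_eq[of "{..<N}" n] by simp
qed

definition supported :: "nat \<Rightarrow> nat \<Rightarrow> op \<Rightarrow> bool" where
  "supported N n X \<longleftrightarrow> (\<forall>a b. (a \<notin> midx N n \<or> b \<notin> midx N n) \<longrightarrow> X a b = 0)"

lemma opmul_supported [simp]:
  assumes "supported N n X" "supported N n Y"
  shows "supported N n (opmul N n X Y)"
  using assms unfolding supported_def opmul_def by (auto intro!: sum.neutral)

lemma opid_supported [simp]: "supported N n (opid N n)"
  by (simp add: supported_def opid_def)

lemma emb2_supported [simp]: "supported N n (emb2 N n k X)"
  by (simp add: supported_def emb2_def)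

lemma emb1_supported [simp]: "supported N n (emb1 N n A)"
  by (simp add: supported_def emb1_def)

lemma opmul_assoc: "opmul N n (opmul N n X Y) Z = opmul N n X (opmul N n Y Z)"
  unfolding opmul_def
  by (auto simp: sum_distrib_left sum_distrib_right mult.assoc intro!: ext sum.swap)

lemma opmul_opid_left [simp]:
  assumes "supported N n X"
  shows "opmul N n (opid N n) X = X"
proof (intro ext)
  fix a c
  have "opmul N n (opid N n) X a c
      = (\<Sum>b\<in>midx N n. if b = a then (if a \<in> midx N n then X a c else 0) else 0)"
    unfolding opmul_def opid_def by (rule sum.cong) auto
  then show "opmul N n (opid N n) X a c = X a c"
    using assms by (simp add: supported_def)
qed

lemma opmul_opid_right [simp]:
  assumes "supported N n X"
  shows "opmul N n X (opid N n) = X"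
proof (intro ext)
  fix a c
  have "opmul N n X (opid N n) a c
      = (\<Sum>b\<in>midx N n. if b = c then (if c \<in> midx N n then X a c else 0) else 0)"
    unfolding opmul_def opid_def by (rule sum.cong) auto
  then show "opmul N n X (opid N n) a c = X a c"
    using assms by (simp add: supported_def)
qed

lemma opmul_opadd_left: "opmul N n (opadd X Y) Z = opadd (opmul N n X Z) (opmul N n Y Z)"
  by (auto simp: opmul_def opadd_def distrib_right sum.distrib intro!: ext)

lemma opmul_opadd_right: "opmul N n Z (opadd X Y) = opadd (opmul N n Z X) (opmul N n Z Y)"
  by (auto simp: opmul_def opadd_def distrib_left sum.distrib intro!: ext)

lemma opmul_opsmul_left: "opmul N n (opsmul c X) Z = opsmul c (opmul N n X Z)"
  by (auto simp: opmul_def opsmul_def sum_distrib_left mult.assoc intro!: ext)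

lemma opmul_opsmul_right: "opmul N n Z (opsmul c X) = opsmul c (opmul N n Z X)"
  by (auto simp: opmul_def opsmul_def sum_distrib_left mult.left_commute intro!: ext)

section \<open>Operators acting on consecutive tensor factors\<close>

definition agrees_outside :: "nat \<Rightarrow> nat \<Rightarrow> nat \<Rightarrow> nat list \<Rightarrow> nat list \<Rightarrow> bool" where
  "agrees_outside n p w a b \<longleftrightarrow> (\<forall>m<n. (m < p \<or> p + w \<le> m) \<longrightarrow> a!m = b!m)"

text \<open>\<open>op_at N n p w Y\<close> is \<open>Y \<in> End(V\<^sup>\<otimes>\<^sup>w)\<close> acting on the factors \<open>p+1, \<dots>, p+w\<close> of
  \<open>V\<^sup>\<otimes>\<^sup>n\<close>; the offset \<open>p\<close> is 0-based.\<close>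
definition op_at :: "nat \<Rightarrow> nat \<Rightarrow> nat \<Rightarrow> nat \<Rightarrow> op \<Rightarrow> op" where
  "op_at N n p w Y = (\<lambda>a b. if a \<in> midx N n \<and> b \<in> midx N n \<and> agrees_outside n p w a b
      then Y (take w (drop p a)) (take w (drop p b)) else 0)"

definition splice_at :: "nat \<Rightarrow> nat \<Rightarrow> nat list \<Rightarrow> nat list \<Rightarrow> nat list" where
  "splice_at p w a m = take p a @ m @ drop (p + w) a"

lemma midx_length: "a \<in> midx N n \<Longrightarrow> length a = n"
  by (simp add: midx_def)

lemma midx_iff: "a \<in> midx N n \<longleftrightarrow> length a = n \<and> (\<forall>m<n. a!m < N)"
  unfolding midx_def by (auto simp: in_set_conv_nth) (metis nth_mem)

lemma take_drop_in_midx: "a \<in> midx N n \<Longrightarrow> p + w \<le> n \<Longrightarrow> take w (drop p a) \<in> midx N w"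
  by (auto simp: midx_iff)

lemma nth_take_drop:
  "p \<le> i \<Longrightarrow> i < p + w \<Longrightarrow> i < length c \<Longrightarrow> take w (drop p c) ! (i - p) = c ! i"
  by (subst nth_take) (auto simp: nth_drop)

lemma length_splice_at:
  "length a = n \<Longrightarrow> length m = w \<Longrightarrow> p + w \<le> n \<Longrightarrow> length (splice_at p w a m) = n"
  by (simp add: splice_at_def)

lemma nth_splice_at:
  "length a = n \<Longrightarrow> length m = w \<Longrightarrow> p + w \<le> n \<Longrightarrow> i < n \<Longrightarrow>
   splice_at p w a m ! i = (if i < p then a!i else if i < p + w then m!(i-p) else a!i)"
  by (auto simp: splice_at_def nth_append min_def)

lemma splice_at_in_midx:
  "a \<in> midx N n \<Longrightarrow> m \<in> midx N w \<Longrightarrow> p + w \<le> n \<Longrightarrow> splice_at p w a m \<in> midx N n"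
  unfolding midx_iff by (auto simp: length_splice_at nth_splice_at)

lemma take_drop_splice_at:
  "length a = n \<Longrightarrow> length m = w \<Longrightarrow> p + w \<le> n \<Longrightarrow> take w (drop p (splice_at p w a m)) = m"
  by (simp add: splice_at_def)

lemma agrees_outside_splice_at_iff:
  "length a = n \<Longrightarrow> length m = w \<Longrightarrow> p + w \<le> n \<Longrightarrow>
   agrees_outside n p w (splice_at p w a m) c \<longleftrightarrow> agrees_outside n p w a c"
  by (auto simp: agrees_outside_def nth_splice_at)

lemma splice_at_take_drop:
  assumes "b \<in> midx N n" "a \<in> midx N n" "p + w \<le> n" "agrees_outside n p w a b"
  shows "splice_at p w a (take w (drop p b)) = b"
proof (rule nth_equalityI)
  show "length (splice_at p w a (take w (drop p b))) = length b"
    using assms by (simp add: midx_length length_splice_at)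
  fix i assume "i < length (splice_at p w a (take w (drop p b)))"
  then show "splice_at p w a (take w (drop p b)) ! i = b ! i"
    using assms by (auto simp: midx_length length_splice_at nth_splice_at agrees_outside_def)
qed

lemma midx_agrees_outside_eq_image:
  assumes a: "a \<in> midx N n" and pw: "p + w \<le> n"
  shows "{b\<in>midx N n. agrees_outside n p w a b} = splice_at p w a ` midx N w"
proof
  show "{b \<in> midx N n. agrees_outside n p w a b} \<subseteq> splice_at p w a ` midx N w"
  proof
    fix b assume b: "b \<in> {b \<in> midx N n. agrees_outside n p w a b}"
    then have "b = splice_at p w a (take w (drop p b))"
      using splice_at_take_drop a pw by auto
    moreover have "take w (drop p b) \<in> midx N w"
      using b pw take_drop_in_midx by blast
    ultimately show "b \<in> splice_at p w a ` midx N w" by blast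
  qed
  show "splice_at p w a ` midx N w \<subseteq> {b \<in> midx N n. agrees_outside n p w a b}"
    using a pw by (auto simp: splice_at_in_midx agrees_outside_def nth_splice_at midx_length)
qed

lemma sum_agrees_outside:
  assumes a: "a \<in> midx N n" and pw: "p + w \<le> n"
  shows "(\<Sum>b\<in>midx N n. if agrees_outside n p w a b then g b else 0)
    = (\<Sum>m\<in>midx N w. g (splice_at p w a m))"
proof -
  have "inj_on (splice_at p w a) (midx N w)"
    by (rule inj_onI) (metis a pw midx_length take_drop_splice_at)
  then show ?thesis
    by (simp add: sum.inter_filter[symmetric] midx_agrees_outside_eq_image[OF a pw] sum.reindex)
qed

lemma op_at_supported [simp]: "supported N n (op_at N n p w X)"
  by (simp add: supported_def op_at_def)

lemma opmul_op_at_left: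
  assumes a: "a \<in> midx N n" and pw: "p + w \<le> n"
  shows "opmul N n (op_at N n p w X) Z a c
    = (\<Sum>m\<in>midx N w. X (take w (drop p a)) m * Z (splice_at p w a m) c)"
proof -
  have "opmul N n (op_at N n p w X) Z a c
      = (\<Sum>b\<in>midx N n. if agrees_outside n p w a b
                        then X (take w (drop p a)) (take w (drop p b)) * Z b c else 0)"
    unfolding opmul_def by (rule sum.cong) (auto simp: op_at_def a)
  also have "\<dots> = (\<Sum>m\<in>midx N w.
      X (take w (drop p a)) (take w (drop p (splice_at p w a m))) * Z (splice_at p w a m) c)"
    by (rule sum_agrees_outside[OF a pw])
  also have "\<dots> = (\<Sum>m\<in>midx N w. X (take w (drop p a)) m * Z (splice_at p w a m) c)"
    using a pw by (intro sum.cong) (auto simp: take_drop_splice_at midx_length)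
  finally show ?thesis .
qed

lemma op_at_opmul:
  assumes pw: "p + w \<le> n"
  shows "op_at N n p w (opmul N w X Y) = opmul N n (op_at N n p w X) (op_at N n p w Y)"
proof (intro ext)
  fix a c
  show "op_at N n p w (opmul N w X Y) a c = opmul N n (op_at N n p w X) (op_at N n p w Y) a c"
  proof (cases "a \<in> midx N n")
    case a: True
    have "opmul N n (op_at N n p w X) (op_at N n p w Y) a c
        = (\<Sum>m\<in>midx N w. if c \<in> midx N n \<and> agrees_outside n p w a c
                          then X (take w (drop p a)) m * Y m (take w (drop p c)) else 0)"
      unfolding opmul_op_at_left[OF a pw] using a pw
      by (auto simp: op_at_def splice_at_in_midx agrees_outside_splice_at_iff take_drop_splice_at
          midx_length intro!: sum.cong)
    also have "\<dots> = op_at N n p w (opmul N w X Y) a c"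
      using a by (auto simp: op_at_def opmul_def)
    finally show ?thesis
      by simp
  qed (simp add: op_at_def opmul_def)
qed

lemma op_at_cong: "opeq N w X Y \<Longrightarrow> p + w \<le> n \<Longrightarrow> op_at N n p w X = op_at N n p w Y"
  unfolding op_at_def opeq_def by (auto intro!: ext simp: take_drop_in_midx)

definition agrees_outside_both ::
    "nat \<Rightarrow> nat \<Rightarrow> nat \<Rightarrow> nat \<Rightarrow> nat \<Rightarrow> nat list \<Rightarrow> nat list \<Rightarrow> bool" where
  "agrees_outside_both n p w q v a c \<longleftrightarrow>
     (\<forall>i<n. (i < p \<or> p + w \<le> i) \<and> (i < q \<or> q + v \<le> i) \<longrightarrow> a!i = c!i)"

lemma take_drop_splice_at_disjoint:
  assumes "p + w \<le> q \<or> q + v \<le> p" "p + w \<le> n" "q + v \<le> n" "length a = n" "length m = w"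
  shows "take v (drop q (splice_at p w a m)) = take v (drop q a)"
  using assms by (intro nth_equalityI) (auto simp: nth_splice_at length_splice_at)

lemma agrees_outside_splice_at_disjoint:
  assumes d: "p + w \<le> q \<or> q + v \<le> p" and pw: "p + w \<le> n" and qv: "q + v \<le> n"
    and a: "length a = n" and m: "length m = w" and c: "length c = n"
  shows "agrees_outside n q v (splice_at p w a m) c \<longleftrightarrow>
    m = take w (drop p c) \<and> agrees_outside_both n p w q v a c"
proof
  assume h: "agrees_outside n q v (splice_at p w a m) c"
  have "m = take w (drop p c)"
  proof (rule nth_equalityI)
    show "length m = length (take w (drop p c))" using m c pw by simp
    fix i assume i: "i < length m"
    have pi: "p + i < n" using i m pw by simp
    have pq: "p + i < q \<or> q + v \<le> p + i" using d i m by auto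
    have "splice_at p w a m ! (p + i) = c ! (p + i)"
      using h pi pq unfolding agrees_outside_def by blast
    then show "m ! i = take w (drop p c) ! i"
      using i m a c pw by (simp add: nth_splice_at)
  qed
  moreover have "agrees_outside_both n p w q v a c"
    unfolding agrees_outside_both_def
  proof (intro allI impI)
    fix i assume "i < n" "(i < p \<or> p + w \<le> i) \<and> (i < q \<or> q + v \<le> i)"
    then show "a ! i = c ! i" using h a m pw unfolding agrees_outside_def
      by (metis nth_splice_at not_le)
  qed
  ultimately show "m = take w (drop p c) \<and> agrees_outside_both n p w q v a c" by blast
next
  assume h: "m = take w (drop p c) \<and> agrees_outside_both n p w q v a c"
  show "agrees_outside n q v (splice_at p w a m) c"
    unfolding agrees_outside_def
  proof (intro allI impI)
    fix i assume i: "i < n" "i < q \<or> q + v \<le> i"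
    show "splice_at p w a m ! i = c ! i"
    proof (cases "p \<le> i \<and> i < p + w")
      case True
      then show ?thesis
        using h a m c pw i by (simp add: nth_splice_at nth_take_drop)
    next
      case False
      then show ?thesis
        using h a m c pw i by (auto simp: nth_splice_at agrees_outside_both_def)
    qed
  qed
qed

lemma opmul_op_at_disjoint:
  assumes d: "p + w \<le> q \<or> q + v \<le> p" and pw: "p + w \<le> n" and qv: "q + v \<le> n"
  shows "opmul N n (op_at N n p w X) (op_at N n q v Y) a c =
    (if a \<in> midx N n \<and> c \<in> midx N n \<and> agrees_outside_both n p w q v a c
     then X (take w (drop p a)) (take w (drop p c)) * Y (take v (drop q a)) (take v (drop q c))
     else 0)"
proof (cases "a \<in> midx N n \<and> c \<in> midx N n")
  case True
  then have a: "a \<in> midx N n" and c: "c \<in> midx N n"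
    by simp_all
  have "op_at N n q v Y (splice_at p w a m) c =
      (if m = take w (drop p c) \<and> agrees_outside_both n p w q v a c
       then Y (take v (drop q a)) (take v (drop q c)) else 0)" if m: "m \<in> midx N w" for m
    using agrees_outside_splice_at_disjoint[OF d pw qv, of a m c]
      take_drop_splice_at_disjoint[OF d pw qv, of a m] a c m splice_at_in_midx[OF a m pw]
    by (auto simp: op_at_def midx_length)
  then show ?thesis
    unfolding opmul_op_at_left[OF a pw] using a c pw
    by (simp add: if_distrib[of "\<lambda>y. _ * y"] sum.delta' take_drop_in_midx cong: if_cong)
qed (auto simp: op_at_def opmul_def)

lemma agrees_outside_both_commute:
  "agrees_outside_both n p w q v a c = agrees_outside_both n q v p w a c"
  unfolding agrees_outside_both_def by auto

lemma op_at_commute: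
  assumes d: "p + w \<le> q \<or> q + v \<le> p" and pw: "p + w \<le> n" and qv: "q + v \<le> n"
  shows "opmul N n (op_at N n p w X) (op_at N n q v Y)
       = opmul N n (op_at N n q v Y) (op_at N n p w X)"
proof (intro ext)
  fix a c
  have d': "q + v \<le> p \<or> p + w \<le> q"
    using d by auto
  show "opmul N n (op_at N n p w X) (op_at N n q v Y) a c
      = opmul N n (op_at N n q v Y) (op_at N n p w X) a c"
    unfolding opmul_op_at_disjoint[OF d pw qv] opmul_op_at_disjoint[OF d' qv pw]
    by (simp add: agrees_outside_both_commute[of n p w q v] mult.commute)
qed

lemma op_at_op_at:
  assumes qv: "q + v \<le> w" and pw: "p + w \<le> n"
  shows "op_at N n p w (op_at N w q v X) = op_at N n (p + q) v X"
proof (intro ext)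
  fix a b
  show "op_at N n p w (op_at N w q v X) a b = op_at N n (p + q) v X a b"
  proof (cases "a \<in> midx N n \<and> b \<in> midx N n")
    case True
    then have la: "length a = n" and lb: "length b = n"
      by (auto simp: midx_length)
    have "take v (drop q (take w (drop p c))) = take v (drop (p + q) c)" for c :: "nat list"
      using qv by (simp add: drop_take take_take min_def add.commute)
    moreover have "agrees_outside n p w a b
        \<and> agrees_outside w q v (take w (drop p a)) (take w (drop p b))
        \<longleftrightarrow> agrees_outside n (p + q) v a b"
    proof
      assume h: "agrees_outside n p w a b
        \<and> agrees_outside w q v (take w (drop p a)) (take w (drop p b))"
      show "agrees_outside n (p + q) v a b"
        unfolding agrees_outside_def
      proof (intro allI impI)
        fix i assume i: "i < n" "i < p + q \<or> p + q + v \<le> i"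
        show "a ! i = b ! i"
        proof (cases "p \<le> i \<and> i < p + w")
          case True
          then have "take w (drop p a) ! (i - p) = take w (drop p b) ! (i - p)"
            using h i unfolding agrees_outside_def by auto
          then show ?thesis
            using True la lb pw i by (simp add: nth_take_drop)
        next
          case False
          then show ?thesis
            using h i unfolding agrees_outside_def by auto
        qed
      qed
    qed (use qv pw la lb in \<open>auto simp: agrees_outside_def\<close>)
    ultimately show ?thesis
      using True pw qv by (auto simp: op_at_def take_drop_in_midx)
  qed (auto simp: op_at_def)
qed

lemma emb2_eq_op_at: "1 \<le> k \<Longrightarrow> k < n \<Longrightarrow> emb2 N n k X = op_at N n (k - 1) 2 X"
proof (intro ext)
  fix a b assume k: "1 \<le> k" "k < n"
  show "emb2 N n k X a b = op_at N n (k - 1) 2 X a b"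
  proof (cases "a \<in> midx N n \<and> b \<in> midx N n")
    case True
    then have la: "length a = n" and lb: "length b = n" by (auto simp: midx_length)
    have "take 2 (drop (k-1) a) = [a!(k-1), a!k]" "take 2 (drop (k-1) b) = [b!(k-1), b!k]"
      using k la lb by (auto intro!: nth_equalityI simp: nth_Cons split: nat.split)
    moreover have "(\<forall>m<n. m \<noteq> k - 1 \<and> m \<noteq> k \<longrightarrow> a!m = b!m) \<longleftrightarrow> agrees_outside n (k-1) 2 a b"
    proof -
      have "\<forall>m. (m \<noteq> k - 1 \<and> m \<noteq> k) = (m < k - 1 \<or> k - 1 + 2 \<le> m)" using k by auto
      then show ?thesis unfolding agrees_outside_def by simp
    qed
    ultimately show ?thesis using True by (simp add: emb2_def op_at_def)
  qed (auto simp: emb2_def op_at_def)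
qed

lemma emb1_eq_op_at: "1 \<le> n \<Longrightarrow> emb1 N n A = op_at N n 0 1 (\<lambda>xs ys. A (hd xs) (hd ys))"
proof (intro ext)
  fix a b assume n: "1 \<le> n"
  show "emb1 N n A a b = op_at N n 0 1 (\<lambda>xs ys. A (hd xs) (hd ys)) a b"
  proof (cases "a \<in> midx N n \<and> b \<in> midx N n")
    case True
    then have la: "length a = n" and lb: "length b = n" by (auto simp: midx_length)
    then have "a \<noteq> []" "b \<noteq> []" using n by auto
    then have "hd (take 1 a) = a!0" "hd (take 1 b) = b!0"
      by (auto simp: hd_conv_nth)
    moreover have "(\<forall>m. 1 \<le> m \<and> m < n \<longrightarrow> a!m = b!m) \<longleftrightarrow> agrees_outside n 0 1 a b"
      unfolding agrees_outside_def by auto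
    ultimately show ?thesis using True by (simp add: emb1_def op_at_def)
  qed (auto simp: emb1_def op_at_def)
qed

lemma agrees_outside_take_drop_eq_iff:
  assumes "a \<in> midx N n" "b \<in> midx N n" "p + w \<le> n"
  shows "agrees_outside n p w a b \<and> take w (drop p a) = take w (drop p b) \<longleftrightarrow> a = b"
proof
  assume "agrees_outside n p w a b \<and> take w (drop p a) = take w (drop p b)"
  then have "b = splice_at p w a (take w (drop p a))"
    using splice_at_take_drop[of b N n a p w] assms by simp
  also have "\<dots> = a"
    using splice_at_take_drop[of a N n a p w] assms by (simp add: agrees_outside_def)
  finally show "a = b" ..
qed (simp add: agrees_outside_def)

lemma op_at_opid:
  assumes "p + w \<le> n"
  shows "op_at N n p w (opid N w) = opid N n"
proof (intro ext)
  fix a b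
  show "op_at N n p w (opid N w) a b = opid N n a b"
    using agrees_outside_take_drop_eq_iff[of a N n b p w] assms
    by (auto simp: op_at_def opid_def take_drop_in_midx)
qed

lemma op_at_opadd: "op_at N n p w (opadd X Y) = opadd (op_at N n p w X) (op_at N n p w Y)"
  by (auto simp: op_at_def opadd_def intro!: ext)

lemma op_at_opsmul: "op_at N n p w (opsmul c X) = opsmul c (op_at N n p w X)"
  by (auto simp: op_at_def opsmul_def intro!: ext)

lemma op_at_emb2_3:
  "i \<in> {1,2} \<Longrightarrow> p + 3 \<le> n \<Longrightarrow> op_at N n p 3 (emb2 N 3 i X) = op_at N n (p + i - 1) 2 X"
  by (auto simp: emb2_eq_op_at op_at_op_at)

section \<open>The action of an involutive symmetry on a tensor power\<close>

declare abar.simps(2) [simp del] pl.simps(2) [simp del] pr.simps(2) [simp del]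
  ql.simps(2) [simp del] qr.simps(2) [simp del]

locale tensor_symmetry =
  fixes N n :: nat and F :: op
  assumes involutive: "involutive_symmetry N F"
begin

abbreviation opmul_n (infixr "\<diamondop>" 70) where "X \<diamondop> Y \<equiv> opmul N n X Y"
abbreviation I where "I \<equiv> opid N n"

text \<open>\<open>F_at p\<close> is \<open>F\<^sub>p\<^sub>+\<^sub>1\<^sub>,\<^sub>p\<^sub>+\<^sub>2\<close>.\<close>
definition F_at :: "nat \<Rightarrow> op" where "F_at p = op_at N n p 2 F"

abbreviation Pl where "Pl K \<equiv> pl N n F K"
abbreviation Pr where "Pr K \<equiv> pr N n F K"
abbreviation Ql where "Ql L \<equiv> ql N n F L"
abbreviation Qr where "Qr L \<equiv> qr N n F L"

lemma F_at_supported [simp]: "supported N n (F_at p)"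
  by (simp add: F_at_def)

lemma opmul_n_assoc [simp]: "(X \<diamondop> Y) \<diamondop> Z = X \<diamondop> (Y \<diamondop> Z)"
  by (rule opmul_assoc)

lemma emb2_eq_F_at: "m + 2 \<le> n \<Longrightarrow> emb2 N n (Suc m) F = F_at m"
  by (simp add: emb2_eq_op_at F_at_def)

lemma F_at_F_at [simp]:
  assumes "p + 2 \<le> n"
  shows "F_at p \<diamondop> F_at p = I"
proof -
  have "opeq N 2 (opmul N 2 F F) (opid N 2)"
    using involutive by (simp add: involutive_symmetry_def)
  then have "op_at N n p 2 (opmul N 2 F F) = op_at N n p 2 (opid N 2)"
    using assms by (rule op_at_cong)
  then show ?thesis
    using assms by (simp add: op_at_opmul op_at_opid F_at_def)
qed

lemma F_at_F_at_cancel [simp]: "p + 2 \<le> n \<Longrightarrow> supported N n X \<Longrightarrow> F_at p \<diamondop> F_at p \<diamondop> X = X"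
  by (simp flip: opmul_n_assoc)

lemma F_at_braid:
  assumes "p + 3 \<le> n"
  shows "F_at p \<diamondop> F_at (p+1) \<diamondop> F_at p = F_at (p+1) \<diamondop> F_at p \<diamondop> F_at (p+1)"
proof -
  have "opeq N 3 (opmul N 3 (opmul N 3 (emb2 N 3 1 F) (emb2 N 3 2 F)) (emb2 N 3 1 F))
                 (opmul N 3 (opmul N 3 (emb2 N 3 2 F) (emb2 N 3 1 F)) (emb2 N 3 2 F))"
    using involutive by (simp add: involutive_symmetry_def braiding_def)
  then have "op_at N n p 3 (opmul N 3 (opmul N 3 (emb2 N 3 1 F) (emb2 N 3 2 F)) (emb2 N 3 1 F))
           = op_at N n p 3 (opmul N 3 (opmul N 3 (emb2 N 3 2 F) (emb2 N 3 1 F)) (emb2 N 3 2 F))"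
    using assms by (rule op_at_cong)
  then show ?thesis
    using assms by (simp add: op_at_opmul op_at_emb2_3 F_at_def)
qed

lemma F_at_braid_left:
  "p + 3 \<le> n \<Longrightarrow> F_at p \<diamondop> F_at (p+1) \<diamondop> F_at p \<diamondop> Z = F_at (p+1) \<diamondop> F_at p \<diamondop> F_at (p+1) \<diamondop> Z"
  using F_at_braid by (metis opmul_n_assoc)

lemma F_at_commute:
  "p + 2 \<le> q \<or> q + 2 \<le> p \<Longrightarrow> p + 2 \<le> n \<Longrightarrow> q + 2 \<le> n \<Longrightarrow> F_at p \<diamondop> F_at q = F_at q \<diamondop> F_at p"
  unfolding F_at_def by (rule op_at_commute)

lemma opmul_n_commute_left: "X \<diamondop> Y = Y \<diamondop> X \<Longrightarrow> X \<diamondop> Y \<diamondop> Z = Y \<diamondop> X \<diamondop> Z"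
  by (metis opmul_n_assoc)

lemma opmul_n_inverse_left: "X \<diamondop> Y = I \<Longrightarrow> supported N n Z \<Longrightarrow> X \<diamondop> Y \<diamondop> Z = Z"
  by (metis opmul_n_assoc opmul_opid_left)

lemma Pl_Suc: "m + 2 \<le> n \<Longrightarrow> Pl (Suc m) = F_at m \<diamondop> Pl m"
  by (simp add: pl.simps(2) emb2_eq_op_at F_at_def)

lemma Pr_Suc: "m + 2 \<le> n \<Longrightarrow> Pr (Suc m) = Pr m \<diamondop> F_at m"
  by (simp add: pr.simps(2) emb2_eq_op_at F_at_def)

lemma Ql_Suc: "m + 3 \<le> n \<Longrightarrow> Ql (Suc m) = F_at (m+1) \<diamondop> Ql m"
  by (simp add: ql.simps(2) emb2_eq_op_at F_at_def)

lemma Qr_Suc: "m + 3 \<le> n \<Longrightarrow> Qr (Suc m) = Qr m \<diamondop> F_at (m+1)"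
  by (simp add: qr.simps(2) emb2_eq_op_at F_at_def)

lemma Pl_supported [simp]: "supported N n (Pl K)"
  by (induction K) (simp_all add: pl.simps(2))

lemma Pr_supported [simp]: "supported N n (Pr K)"
  by (induction K) (simp_all add: pr.simps(2))

lemma Ql_supported [simp]: "supported N n (Ql L)"
  by (induction L) (simp_all add: ql.simps(2))

lemma Qr_supported [simp]: "supported N n (Qr L)"
  by (induction L) (simp_all add: qr.simps(2))

lemma Pr_Pl: "K + 1 \<le> n \<Longrightarrow> Pr K \<diamondop> Pl K = I"
  by (induction K) (simp_all add: Pl_Suc Pr_Suc)

lemma Pl_Pr: "K + 1 \<le> n \<Longrightarrow> Pl K \<diamondop> Pr K = I"
  by (induction K) (simp_all add: Pl_Suc Pr_Suc opmul_n_inverse_left)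

lemma Qr_Ql: "L + 2 \<le> n \<Longrightarrow> Qr L \<diamondop> Ql L = I"
  by (induction L) (simp_all add: Ql_Suc Qr_Suc)

lemma Ql_Qr: "L + 2 \<le> n \<Longrightarrow> Ql L \<diamondop> Qr L = I"
  by (induction L) (simp_all add: Ql_Suc Qr_Suc opmul_n_inverse_left)

lemma Pr_Pl_cancel [simp]: "K + 1 \<le> n \<Longrightarrow> supported N n Z \<Longrightarrow> Pr K \<diamondop> Pl K \<diamondop> Z = Z"
  by (rule opmul_n_inverse_left[OF Pr_Pl])

lemma Pl_Pr_cancel [simp]: "K + 1 \<le> n \<Longrightarrow> supported N n Z \<Longrightarrow> Pl K \<diamondop> Pr K \<diamondop> Z = Z"
  by (rule opmul_n_inverse_left[OF Pl_Pr])

lemma Qr_Ql_cancel [simp]: "L + 2 \<le> n \<Longrightarrow> supported N n Z \<Longrightarrow> Qr L \<diamondop> Ql L \<diamondop> Z = Z"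
  by (rule opmul_n_inverse_left[OF Qr_Ql])

lemma Ql_Qr_cancel [simp]: "L + 2 \<le> n \<Longrightarrow> supported N n Z \<Longrightarrow> Ql L \<diamondop> Qr L \<diamondop> Z = Z"
  by (rule opmul_n_inverse_left[OF Ql_Qr])

end

section \<open>Compatibility with F\<close>

lemma mult_const_in_bigo_square_at_0_imp_zero:
  assumes "(\<lambda>h::complex. h * c) \<in> O[at 0](\<lambda>h. h ^ 2)"
  shows "c = 0"
proof (rule ccontr)
  assume "c \<noteq> 0"
  then have "(\<lambda>h::complex. h) \<in> O[at 0](\<lambda>h. h ^ 2)"
    using assms by simp
  moreover have "(\<lambda>h::complex. h ^ 2) \<in> o[at 0](\<lambda>h. h)"
    by (rule smalloI_tendsto)
      (auto simp: power2_eq_square eventually_at_filter intro!: tendsto_eq_intros)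
  ultimately have "eventually (\<lambda>h::complex. h = 0) (at 0)"
    by (rule landau_o.big_small_asymmetric)
  then have "eventually (\<lambda>h::complex. False) (at 0)"
    using eventually_neq_at_within[of 0] by eventually_elim simp
  then show False
    by simp
qed

lemma op_at_bigo:
  assumes "\<forall>c\<in>midx N w. \<forall>d\<in>midx N w. (\<lambda>h. E h c d) \<in> O[L](g)" and "p + w \<le> n"
  shows "(\<lambda>h. op_at N n p w (E h) a b) \<in> O[L](g)"
proof (cases "a \<in> midx N n \<and> b \<in> midx N n \<and> agrees_outside n p w a b")
  case True
  then show ?thesis
    using assms take_drop_in_midx[of a N n p w] take_drop_in_midx[of b N n p w]
    by (simp add: op_at_def)
next
  case False
  then have "(\<lambda>h. op_at N n p w (E h) a b) = (\<lambda>h. 0)"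
    by (auto simp: op_at_def)
  then show ?thesis
    by simp
qed

lemma opmul_bigo_left:
  "(\<And>a b. (\<lambda>h. X h a b) \<in> O[L](g)) \<Longrightarrow> (\<lambda>h. opmul N n (X h) Y a b) \<in> O[L](g)"
  unfolding opmul_def by (intro big_sum_in_bigo) simp

lemma opmul_bigo_right:
  "(\<And>a b. (\<lambda>h. Y h a b) \<in> O[L](g)) \<Longrightarrow> (\<lambda>h. opmul N n X (Y h) a b) \<in> O[L](g)"
  unfolding opmul_def by (intro big_sum_in_bigo) simp

context tensor_symmetry
begin

definition lifted_compatible :: "op \<Rightarrow> bool" where
  "lifted_compatible X \<longleftrightarrow> op_at N n 0 2 X \<diamondop> F_at 1 \<diamondop> F_at 0 = F_at 1 \<diamondop> F_at 0 \<diamondop> op_at N n 1 2 X"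

lemma lifted_compatible_F: "3 \<le> n \<Longrightarrow> lifted_compatible F"
  using F_at_braid[of 0] by (simp add: lifted_compatible_def F_at_def numeral_2_eq_2)

lemma lifted_compatible_opadd:
  "lifted_compatible X \<Longrightarrow> lifted_compatible Y \<Longrightarrow> lifted_compatible (opadd X Y)"
  unfolding lifted_compatible_def op_at_opadd opmul_opadd_left opmul_opadd_right opmul_assoc
  by simp

lemma lifted_compatible_opsmul: "lifted_compatible X \<Longrightarrow> lifted_compatible (opsmul c X)"
  unfolding lifted_compatible_def op_at_opsmul opmul_opsmul_left opmul_opsmul_right opmul_assoc
  by simp

lemma lifted_compatible_conj_F:
  assumes X: "lifted_compatible X" and n: "3 \<le> n"
  shows "lifted_compatible (opmul N 2 (opmul N 2 F X) F)"
proof -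
  define x0 where "x0 = op_at N n 0 2 X"
  define x1 where "x1 = op_at N n 1 2 X"
  have [simp]: "supported N n x0" "supported N n x1"
    by (simp_all add: x0_def x1_def)
  have X': "x0 \<diamondop> F_at 1 \<diamondop> F_at 0 = F_at 1 \<diamondop> F_at 0 \<diamondop> x1"
    using X by (simp add: lifted_compatible_def x0_def x1_def)
  have braid: "F_at 0 \<diamondop> F_at 1 \<diamondop> F_at 0 = F_at 1 \<diamondop> F_at 0 \<diamondop> F_at 1"
    using F_at_braid[of 0] n by simp
  have "(F_at 0 \<diamondop> x0 \<diamondop> F_at 0) \<diamondop> F_at 1 \<diamondop> F_at 0 = F_at 0 \<diamondop> x0 \<diamondop> (F_at 0 \<diamondop> F_at 1 \<diamondop> F_at 0)"
    by simp
  also have "\<dots> = F_at 0 \<diamondop> (x0 \<diamondop> F_at 1 \<diamondop> F_at 0) \<diamondop> F_at 1"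
    by (simp only: braid opmul_n_assoc)
  also have "\<dots> = (F_at 0 \<diamondop> F_at 1 \<diamondop> F_at 0) \<diamondop> x1 \<diamondop> F_at 1"
    by (simp only: X' opmul_n_assoc)
  also have "\<dots> = F_at 1 \<diamondop> F_at 0 \<diamondop> (F_at 1 \<diamondop> x1 \<diamondop> F_at 1)"
    by (simp only: braid opmul_n_assoc)
  finally show ?thesis
    using n by (simp add: lifted_compatible_def op_at_opmul F_at_def x0_def x1_def)
qed

lemma lifted_compatible_mult_F:
  assumes R: "compatible N R F" and n: "3 \<le> n"
  shows "lifted_compatible (opmul N 2 R F)"
proof -
  define r0 where "r0 = op_at N n 0 2 R"
  define r1 where "r1 = op_at N n 1 2 R"
  have [simp]: "supported N n r0" "supported N n r1"
    by (simp_all add: r0_def r1_def)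
  have "opeq N 3 (opmul N 3 (opmul N 3 (emb2 N 3 1 R) (emb2 N 3 2 F)) (emb2 N 3 1 F))
                 (opmul N 3 (opmul N 3 (emb2 N 3 2 F) (emb2 N 3 1 F)) (emb2 N 3 2 R))"
    using R by (simp add: compatible_def)
  then have "op_at N n 0 3 (opmul N 3 (opmul N 3 (emb2 N 3 1 R) (emb2 N 3 2 F)) (emb2 N 3 1 F))
           = op_at N n 0 3 (opmul N 3 (opmul N 3 (emb2 N 3 2 F) (emb2 N 3 1 F)) (emb2 N 3 2 R))"
    using n by (intro op_at_cong) simp_all
  then have R': "r0 \<diamondop> F_at 1 \<diamondop> F_at 0 = F_at 1 \<diamondop> F_at 0 \<diamondop> r1"
    using n by (simp add: op_at_opmul op_at_emb2_3 F_at_def r0_def r1_def)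
  have braid: "F_at 0 \<diamondop> F_at 1 \<diamondop> F_at 0 = F_at 1 \<diamondop> F_at 0 \<diamondop> F_at 1"
    using F_at_braid[of 0] n by simp
  have "(r0 \<diamondop> F_at 0) \<diamondop> F_at 1 \<diamondop> F_at 0 = r0 \<diamondop> (F_at 0 \<diamondop> F_at 1 \<diamondop> F_at 0)"
    by simp
  also have "\<dots> = (r0 \<diamondop> F_at 1 \<diamondop> F_at 0) \<diamondop> F_at 1"
    by (simp only: braid opmul_n_assoc)
  also have "\<dots> = F_at 1 \<diamondop> F_at 0 \<diamondop> (r1 \<diamondop> F_at 1)"
    by (simp only: R' opmul_n_assoc)
  finally show ?thesis
    using n by (simp add: lifted_compatible_def op_at_opmul F_at_def r0_def r1_def)
qed

lemma lifted_compatible_F_mult_F: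
  assumes "opeq N 2 R F" and n: "3 \<le> n"
  shows "lifted_compatible (opmul N 2 R F)"
proof -
  have "op_at N n p 2 R = F_at p" if "p \<le> 1" for p
    unfolding F_at_def using assms that by (intro op_at_cong) simp_all
  then show ?thesis
    using n by (simp add: lifted_compatible_def op_at_opmul F_at_def[symmetric])
qed

definition compat_defect :: "op \<Rightarrow> op" where
  "compat_defect X = (\<lambda>a b. (op_at N n 0 2 X \<diamondop> F_at 1 \<diamondop> F_at 0) a b
                              - (F_at 1 \<diamondop> F_at 0 \<diamondop> op_at N n 1 2 X) a b)"

lemma lifted_compatible_iff_compat_defect: "lifted_compatible X \<longleftrightarrow> compat_defect X = (\<lambda>a b. 0)"
  unfolding lifted_compatible_def compat_defect_def by (auto simp: fun_eq_iff)

lemma compat_defect_opadd: "compat_defect (opadd X Y) = opadd (compat_defect X) (compat_defect Y)"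
  unfolding compat_defect_def op_at_opadd opmul_opadd_left opmul_opadd_right
  by (simp add: opadd_def fun_eq_iff)

lemma compat_defect_opsmul: "compat_defect (opsmul c X) = opsmul c (compat_defect X)"
  unfolding compat_defect_def op_at_opsmul opmul_opsmul_left opmul_opsmul_right
  by (simp add: opsmul_def fun_eq_iff algebra_simps)

lemma compat_defect_opid: "3 \<le> n \<Longrightarrow> compat_defect (opid N 2) = (\<lambda>a b. 0)"
  by (simp add: compat_defect_def op_at_opid)

lemma compat_defect_bigo:
  assumes "\<forall>c\<in>midx N 2. \<forall>d\<in>midx N 2. (\<lambda>h. E h c d) \<in> O[L](g)" and "3 \<le> n"
  shows "(\<lambda>h. compat_defect (E h) a b) \<in> O[L](g)"
  unfolding compat_defect_def using assms
  by (intro sum_in_bigo opmul_bigo_left opmul_bigo_right op_at_bigo) simp_all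

text \<open>Compatibility is a linear condition, so it passes to the first-order coefficient of an
  (eventually) compatible family that starts at the identity.\<close>
lemma lifted_compatible_first_order_coeff:
  assumes n: "3 \<le> n"
    and Z: "eventually (\<lambda>h. lifted_compatible (Z h)) (at (0::complex))"
    and expansion: "\<forall>a\<in>midx N 2. \<forall>b\<in>midx N 2.
      (\<lambda>h. Z h a b - (opid N 2 a b + h * X a b)) \<in> O[at 0](\<lambda>h. h ^ 2)"
  shows "lifted_compatible X"
proof -
  define E where "E h = (\<lambda>a b. Z h a b - (opid N 2 a b + h * X a b))" for h
  have Z_eq: "Z h = opadd (opadd (opid N 2) (opsmul h X)) (E h)" for h
    by (auto simp: E_def opadd_def opsmul_def)
  have defect_Z: "compat_defect (Z h) a b = h * compat_defect X a b + compat_defect (E h) a b"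
    for h a b
    unfolding Z_eq compat_defect_opadd compat_defect_opsmul compat_defect_opid[OF n]
    by (simp add: opadd_def opsmul_def)
  have "compat_defect X a b = 0" for a b
  proof (rule mult_const_in_bigo_square_at_0_imp_zero)
    have "(\<lambda>h. compat_defect (E h) a b) \<in> O[at 0](\<lambda>h. h ^ 2)"
      using expansion n unfolding E_def by (intro compat_defect_bigo) simp_all
    moreover have "eventually (\<lambda>h. compat_defect (E h) a b = - (h * compat_defect X a b)) (at 0)"
      using Z
    proof eventually_elim
      case (elim h)
      then have "compat_defect (Z h) a b = 0"
        by (simp add: lifted_compatible_iff_compat_defect)
      then show ?case
        by (simp add: defect_Z add_eq_0_iff)
    qed
    ultimately show "(\<lambda>h. h * compat_defect X a b) \<in> O[at 0](\<lambda>h. h ^ 2)"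
      using landau_o.big.in_cong by fastforce
  qed
  then show ?thesis
    by (simp add: lifted_compatible_iff_compat_defect fun_eq_iff)
qed

lemma eventually_lifted_compatible_exp_mult_F:
  assumes n: "3 \<le> n" and e: "e > 0"
    and compat: "\<forall>q\<in>ball 1 e - {-1, 0, 1}. compatible N (Rq q) F"
    and R1: "opeq N 2 (Rq 1) F"
  shows "eventually (\<lambda>h. lifted_compatible (opmul N 2 (Rq (exp h)) F)) (at (0::complex))"
proof -
  have "((\<lambda>h. exp h) \<longlongrightarrow> exp 0) (at (0::complex))"
    by (intro tendsto_intros)
  then have "eventually (\<lambda>h. dist (exp h) 1 < min e 1) (at (0::complex))"
    using e by (intro tendstoD) auto
  then show ?thesis
  proof eventually_elim
    case (elim h)
    then have "exp h \<noteq> -1"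
      by (auto simp: dist_norm)
    then have "compatible N (Rq (exp h)) F \<or> exp h = 1"
      using compat elim by (auto simp: dist_commute)
    then show ?case
      using R1 n lifted_compatible_mult_F lifted_compatible_F_mult_F by auto
  qed
qed

lemma trigonometric_r_lifted_compatible:
  assumes n: "3 \<le> n" and e: "e > 0"
    and compat: "\<forall>q\<in>ball 1 e - {-1, 0, 1}. compatible N (Rq q) F"
    and R1: "opeq N 2 (Rq 1) F"
    and expansion: "\<forall>a\<in>midx N 2. \<forall>b\<in>midx N 2.
      (\<lambda>h::complex. opmul N 2 (Rq (exp h)) F a b - (opid N 2 a b + h * rm a b)) \<in> O[at 0](\<lambda>h. h ^ 2)"
  shows "lifted_compatible (opadd (opsmul (u / (u - v)) F) (opsmul (- 1 / 2) rm))"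
proof -
  have "lifted_compatible rm"
    using n eventually_lifted_compatible_exp_mult_F[OF n e compat R1] expansion
    by (rule lifted_compatible_first_order_coeff)
  then show ?thesis
    using n by (intro lifted_compatible_opadd lifted_compatible_opsmul lifted_compatible_F)
qed

end

section \<open>Commuting \<open>A\<^sub>k\<close> past \<open>X\<^sub>i\<^sub>j\<close>\<close>

locale tensor_symmetry_matrix = tensor_symmetry +
  fixes A :: "nat \<Rightarrow> nat \<Rightarrow> complex"
begin

abbreviation Abar where "Abar m \<equiv> abar N n F A m"

lemma Abar_supported [simp]: "supported N n (Abar m)"
  by (induction m) (simp_all add: abar.simps)

lemma Abar_0: "1 \<le> n \<Longrightarrow> Abar 0 = op_at N n 0 1 (\<lambda>xs ys. A (hd xs) (hd ys))"
  by (simp add: emb1_eq_op_at)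

lemma Abar_Suc: "m + 2 \<le> n \<Longrightarrow> Abar (Suc m) = F_at m \<diamondop> Abar m \<diamondop> F_at m"
  unfolding abar.simps(2) using emb2_eq_F_at[of m] by (simp only: Suc_eq_plus1 opmul_n_assoc)

lemma F_at_Abar_commute:
  "j + 2 \<le> n \<Longrightarrow> M < n \<Longrightarrow> j \<noteq> M \<Longrightarrow> j + 1 \<noteq> M \<Longrightarrow> F_at j \<diamondop> Abar M = Abar M \<diamondop> F_at j"
proof (induction M arbitrary: j rule: less_induct)
  case (less M)
  show ?case
  proof (cases M)
    case 0
    then show ?thesis
      using less unfolding F_at_def by (simp only: Abar_0) (rule op_at_commute, auto)
  next
    case (Suc M')
    have Abar_M: "Abar M = F_at M' \<diamondop> Abar M' \<diamondop> F_at M'"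
      using Suc less Abar_Suc by simp
    show ?thesis
    proof (cases "M' = j + 1")
      case False
      have F_comm: "F_at j \<diamondop> F_at M' = F_at M' \<diamondop> F_at j"
        using less Suc False by (intro F_at_commute) auto
      have IH: "F_at j \<diamondop> Abar M' = Abar M' \<diamondop> F_at j"
        using less Suc False by (intro less.IH) auto
      have "F_at j \<diamondop> Abar M = F_at M' \<diamondop> F_at j \<diamondop> Abar M' \<diamondop> F_at M'"
        using F_comm by (simp add: Abar_M opmul_n_commute_left)
      also have "\<dots> = F_at M' \<diamondop> Abar M' \<diamondop> F_at j \<diamondop> F_at M'"
        using IH by (simp add: opmul_n_commute_left)
      also have "\<dots> = F_at M' \<diamondop> Abar M' \<diamondop> F_at M' \<diamondop> F_at j"
        using F_comm by simp
      finally show ?thesis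
        by (simp add: Abar_M)
    next
      case True
      have j: "j + 3 \<le> n"
        using less Suc True by simp
      have Abar_M': "Abar (j + 1) = F_at j \<diamondop> Abar j \<diamondop> F_at j"
        using Abar_Suc[of j] j by simp
      have IH: "F_at (j+1) \<diamondop> Abar j = Abar j \<diamondop> F_at (j+1)"
        using less Suc True by (intro less.IH) auto
      have "F_at j \<diamondop> Abar M = F_at j \<diamondop> F_at (j+1) \<diamondop> F_at j \<diamondop> Abar j \<diamondop> F_at j \<diamondop> F_at (j+1)"
        by (simp only: Abar_M True Abar_M' opmul_n_assoc)
      also have "\<dots> = F_at (j+1) \<diamondop> F_at j \<diamondop> F_at (j+1) \<diamondop> Abar j \<diamondop> F_at j \<diamondop> F_at (j+1)"
        using F_at_braid_left[OF j] by simp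
      also have "\<dots> = F_at (j+1) \<diamondop> F_at j \<diamondop> Abar j \<diamondop> F_at (j+1) \<diamondop> F_at j \<diamondop> F_at (j+1)"
        using IH by (simp add: opmul_n_commute_left)
      also have "\<dots> = F_at (j+1) \<diamondop> F_at j \<diamondop> Abar j \<diamondop> F_at j \<diamondop> F_at (j+1) \<diamondop> F_at j"
        using F_at_braid[OF j] by simp
      also have "\<dots> = Abar M \<diamondop> F_at j"
        by (simp only: Abar_M True Abar_M' opmul_n_assoc)
      finally show ?thesis .
    qed
  qed
qed

lemma Pr_Abar_Pl:
  "K < n \<Longrightarrow> M < n \<Longrightarrow> M \<noteq> K \<Longrightarrow> Pr K \<diamondop> Abar M \<diamondop> Pl K = Abar (if M < K then M + 1 else M)"
proof (induction K arbitrary: M)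
  case (Suc K)
  have K: "K + 2 \<le> n"
    using Suc by simp
  show ?case
  proof (cases "M = K")
    case True
    have "Pr (Suc K) \<diamondop> Abar M \<diamondop> Pl (Suc K) = Pr K \<diamondop> Abar (Suc K) \<diamondop> Pl K"
      using K True by (simp add: Pl_Suc Pr_Suc Abar_Suc)
    also have "\<dots> = Abar (Suc K)"
      using Suc.IH[of "Suc K"] Suc.prems by simp
    finally show ?thesis
      using True by simp
  next
    case False
    have F_comm: "F_at K \<diamondop> Abar M = Abar M \<diamondop> F_at K"
      using False Suc.prems K by (intro F_at_Abar_commute) auto
    have "Pr (Suc K) \<diamondop> Abar M \<diamondop> Pl (Suc K) = Pr K \<diamondop> (F_at K \<diamondop> Abar M) \<diamondop> F_at K \<diamondop> Pl K"
      using K by (simp add: Pl_Suc Pr_Suc)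
    also have "\<dots> = Pr K \<diamondop> (Abar M \<diamondop> F_at K) \<diamondop> F_at K \<diamondop> Pl K"
      by (simp only: F_comm)
    also have "\<dots> = Pr K \<diamondop> Abar M \<diamondop> Pl K"
      using K by simp
    also have "\<dots> = Abar (if M < K then M + 1 else M)"
      using Suc.IH[of M] Suc.prems False by simp
    finally show ?thesis
      using False by simp
  qed
qed simp

lemma Qr_Abar_Ql:
  "L + 2 \<le> n \<Longrightarrow> 1 \<le> M \<Longrightarrow> M < n \<Longrightarrow> M \<noteq> L + 1 \<Longrightarrow>
   Qr L \<diamondop> Abar M \<diamondop> Ql L = Abar (if M \<le> L then M + 1 else M)"
proof (induction L arbitrary: M)
  case (Suc L)
  have L: "L + 3 \<le> n"
    using Suc by simp
  show ?case
  proof (cases "M = L + 1")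
    case True
    have "Qr (Suc L) \<diamondop> Abar M \<diamondop> Ql (Suc L) = Qr L \<diamondop> Abar (L + 2) \<diamondop> Ql L"
      using L True Abar_Suc[of "L+1"] by (simp add: Ql_Suc Qr_Suc)
    also have "\<dots> = Abar (L + 2)"
      using Suc.IH[of "L + 2"] Suc.prems by simp
    finally show ?thesis
      using True by simp
  next
    case False
    have F_comm: "F_at (L+1) \<diamondop> Abar M = Abar M \<diamondop> F_at (L+1)"
      using False Suc.prems L by (intro F_at_Abar_commute) auto
    have "Qr (Suc L) \<diamondop> Abar M \<diamondop> Ql (Suc L) = Qr L \<diamondop> (F_at (L+1) \<diamondop> Abar M) \<diamondop> F_at (L+1) \<diamondop> Ql L"
      using L by (simp add: Ql_Suc Qr_Suc)
    also have "\<dots> = Qr L \<diamondop> (Abar M \<diamondop> F_at (L+1)) \<diamondop> F_at (L+1) \<diamondop> Ql L"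
      by (simp only: F_comm)
    also have "\<dots> = Qr L \<diamondop> Abar M \<diamondop> Ql L"
      using L by simp
    also have "\<dots> = Abar (if M \<le> L then M + 1 else M)"
      using Suc.IH[of M] Suc.prems False by simp
    finally show ?thesis
      using False by simp
  qed
qed simp

text \<open>The word \<open>Pl (k-1) \<diamondop> Ql (l-2)\<close> moves the factors \<open>1, 2\<close> to \<open>k, l\<close>; it moves
  some factor \<open>\<ge> 3\<close> to every other factor \<open>m\<close>.\<close>
lemma Abar_eq_conj_Pl_Ql:
  assumes kl: "1 \<le> k" "k < l" "l \<le> n" and m: "1 \<le> m" "m \<le> n" "m \<noteq> k" "m \<noteq> l"
  obtains M where "2 \<le> M" "M < n"
    and "Abar (m - 1) = Pl (k - 1) \<diamondop> Ql (l - 2) \<diamondop> Abar M \<diamondop> Qr (l - 2) \<diamondop> Pr (k - 1)"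
proof -
  define K L where "K = k - 1" and "L = l - 2"
  define M' where "M' = (if m - 1 < K then m else m - 1)"
  define M where "M = (if M' \<le> L then M' + 1 else M')"
  have K: "K + 1 \<le> n" and L: "L + 2 \<le> n"
    using kl by (auto simp: K_def L_def)
  have M': "1 \<le> M'" "M' < n" "M' \<noteq> L + 1"
    using kl m by (auto simp: M'_def K_def L_def)
  have conj: "Qr L \<diamondop> Pr K \<diamondop> Abar (m - 1) \<diamondop> Pl K \<diamondop> Ql L = Abar M"
  proof -
    have "Qr L \<diamondop> Pr K \<diamondop> Abar (m - 1) \<diamondop> Pl K \<diamondop> Ql L = Qr L \<diamondop> (Pr K \<diamondop> Abar (m - 1) \<diamondop> Pl K) \<diamondop> Ql L"
      by simp
    also have "\<dots> = Qr L \<diamondop> Abar M' \<diamondop> Ql L"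
      using Pr_Abar_Pl[of K "m - 1"] kl m by (simp add: M'_def K_def)
    also have "\<dots> = Abar M"
      using Qr_Abar_Ql[OF L M'] by (simp add: M_def)
    finally show ?thesis .
  qed
  have "Abar (m - 1) = Pl K \<diamondop> Ql L \<diamondop> Abar M \<diamondop> Qr L \<diamondop> Pr K"
    using K L by (simp add: Pl_Pr Ql_Qr flip: conj)
  moreover have "2 \<le> M" "M < n"
    using M' L by (auto simp: M_def L_def)
  ultimately show ?thesis
    using that by (simp add: K_def L_def)
qed

lemma lifted_compatible_Abar_commute:
  assumes X: "lifted_compatible X" and n: "3 \<le> n" and M: "2 \<le> M" "M < n"
  shows "op_at N n 0 2 X \<diamondop> Abar M = Abar M \<diamondop> op_at N n 0 2 X"
  using M
proof (induction M rule: dec_induct)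
  case base
  define x0 where "x0 = op_at N n 0 2 X"
  define x1 where "x1 = op_at N n 1 2 X"
  have [simp]: "supported N n x0" "supported N n x1"
    by (simp_all add: x0_def x1_def)
  have X': "x0 \<diamondop> F_at 1 \<diamondop> F_at 0 = F_at 1 \<diamondop> F_at 0 \<diamondop> x1"
    using X by (simp add: lifted_compatible_def x0_def x1_def)
  have "F_at 0 \<diamondop> F_at 1 \<diamondop> (x0 \<diamondop> F_at 1 \<diamondop> F_at 0) \<diamondop> F_at 0 \<diamondop> F_at 1
      = F_at 0 \<diamondop> F_at 1 \<diamondop> (F_at 1 \<diamondop> F_at 0 \<diamondop> x1) \<diamondop> F_at 0 \<diamondop> F_at 1"
    by (simp only: X')
  then have X'': "F_at 0 \<diamondop> F_at 1 \<diamondop> x0 = x1 \<diamondop> F_at 0 \<diamondop> F_at 1"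
    using n by simp
  have Abar_2: "Abar 2 = F_at 1 \<diamondop> F_at 0 \<diamondop> Abar 0 \<diamondop> F_at 0 \<diamondop> F_at 1"
    using Abar_Suc[of 0] Abar_Suc[of 1] n by (simp add: numeral_2_eq_2)
  have "Abar 0 = op_at N n 0 1 (\<lambda>xs ys. A (hd xs) (hd ys))"
    using n by (intro Abar_0) simp
  then have x1_Abar_0: "x1 \<diamondop> Abar 0 = Abar 0 \<diamondop> x1"
    unfolding x1_def using n by (simp only:) (rule op_at_commute, auto)
  have "x0 \<diamondop> Abar 2 = (x0 \<diamondop> F_at 1 \<diamondop> F_at 0) \<diamondop> Abar 0 \<diamondop> F_at 0 \<diamondop> F_at 1"
    by (simp add: Abar_2)
  also have "\<dots> = F_at 1 \<diamondop> F_at 0 \<diamondop> (x1 \<diamondop> Abar 0) \<diamondop> F_at 0 \<diamondop> F_at 1"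
    by (simp only: X' opmul_n_assoc)
  also have "\<dots> = F_at 1 \<diamondop> F_at 0 \<diamondop> Abar 0 \<diamondop> (x1 \<diamondop> F_at 0 \<diamondop> F_at 1)"
    by (simp only: x1_Abar_0 opmul_n_assoc)
  also have "\<dots> = F_at 1 \<diamondop> F_at 0 \<diamondop> Abar 0 \<diamondop> (F_at 0 \<diamondop> F_at 1 \<diamondop> x0)"
    by (simp only: X'')
  also have "\<dots> = Abar 2 \<diamondop> x0"
    by (simp add: Abar_2)
  finally show ?case
    by (simp add: x0_def)
next
  case (step M)
  have M: "M + 2 \<le> n"
    using step by simp
  have IH: "op_at N n 0 2 X \<diamondop> Abar M = Abar M \<diamondop> op_at N n 0 2 X"
    using step by simp
  have X_F: "op_at N n 0 2 X \<diamondop> F_at M = F_at M \<diamondop> op_at N n 0 2 X"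
    unfolding F_at_def using step M by (intro op_at_commute) auto
  have "op_at N n 0 2 X \<diamondop> Abar (Suc M) = F_at M \<diamondop> (op_at N n 0 2 X \<diamondop> Abar M) \<diamondop> F_at M"
    by (simp only: Abar_Suc[OF M] X_F opmul_n_commute_left opmul_n_assoc)
  also have "\<dots> = F_at M \<diamondop> Abar M \<diamondop> (op_at N n 0 2 X \<diamondop> F_at M)"
    by (simp only: IH opmul_n_assoc)
  also have "\<dots> = Abar (Suc M) \<diamondop> op_at N n 0 2 X"
    by (simp only: X_F Abar_Suc[OF M] opmul_n_assoc)
  finally show ?case .
qed

lemma xbar_Abar_commute:
  assumes X: "lifted_compatible X"
    and kl: "1 \<le> k" "k < l" "l \<le> n" and m: "1 \<le> m" "m \<le> n" "m \<noteq> k" "m \<noteq> l"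
  shows "xbar N n F X k l \<diamondop> Abar (m - 1) = Abar (m - 1) \<diamondop> xbar N n F X k l"
proof -
  obtain M where M: "2 \<le> M" "M < n"
    and Abar_m: "Abar (m - 1) = Pl (k - 1) \<diamondop> Ql (l - 2) \<diamondop> Abar M \<diamondop> Qr (l - 2) \<diamondop> Pr (k - 1)"
    using Abar_eq_conj_Pl_Ql[OF kl m] .
  have xbar:
    "xbar N n F X k l = Pl (k - 1) \<diamondop> Ql (l - 2) \<diamondop> op_at N n 0 2 X \<diamondop> Qr (l - 2) \<diamondop> Pr (k - 1)"
    using kl by (simp add: xbar_def emb2_eq_op_at)
  have "op_at N n 0 2 X \<diamondop> Abar M = Abar M \<diamondop> op_at N n 0 2 X"
    using X M kl by (intro lifted_compatible_Abar_commute) auto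
  then show ?thesis
    using kl unfolding Abar_m xbar by (simp add: opmul_n_commute_left)
qed

lemma ovl2_ovl1_commute:
  assumes X: "lifted_compatible X"
    and ijk: "0 < i" "0 < j" "0 < k" "i \<noteq> j" "i \<noteq> k" "j \<noteq> k" "i \<le> n" "j \<le> n" "k \<le> n"
  shows "ovl2 N n F X i j \<diamondop> ovl1 N n F A k = ovl1 N n F A k \<diamondop> ovl2 N n F X i j"
proof (cases "i < j")
  case True
  then show ?thesis
    using xbar_Abar_commute[OF X, of i j k] ijk by (simp add: ovl2_def ovl1_def)
next
  case False
  have "lifted_compatible (opmul N 2 (opmul N 2 F X) F)"
    using X ijk by (intro lifted_compatible_conj_F) auto
  from xbar_Abar_commute[OF this, of j i k] show ?thesis
    using False ijk by (simp add: ovl2_def ovl1_def)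
qed

end

theorem mainTheorem4:
  fixes N n i j k :: nat and F :: op and A :: "nat \<Rightarrow> nat \<Rightarrow> complex"
    and u v :: complex and rr :: "complex \<Rightarrow> complex \<Rightarrow> op"
  assumes F: "involutive_symmetry N F"
    and rcases:
      "(\<exists>R. braiding N R \<and> compatible N R F \<and> rr = (\<lambda>u v. opsmul (1 / (u - v)) F))
       \<or> (\<exists>Rq rm e. e > 0
            \<and> (\<forall>a\<in>midx N 2. \<forall>b\<in>midx N 2. (\<lambda>q. Rq q a b) analytic_on ball 1 e)
            \<and> (\<forall>q\<in>ball 1 e - {-1, 0, 1}. hecke_symmetry N q (Rq q) \<and> compatible N (Rq q) F)
            \<and> opeq N 2 (Rq 1) F
            \<and> (\<forall>a\<in>midx N 2. \<forall>b\<in>midx N 2.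
                 (\<lambda>h::complex. opmul N 2 (Rq (exp h)) F a b - (opid N 2 a b + h * rm a b))
                   \<in> O[at 0](\<lambda>h. h ^ 2))
            \<and> rr = (\<lambda>u v. opadd (opsmul (u / (u - v)) F) (opsmul (- 1 / 2) rm)))"
    and uv: "u \<noteq> v"
    and pos: "0 < i" "0 < j" "0 < k"
    and dist: "i \<noteq> j" "i \<noteq> k" "j \<noteq> k"
    and le: "i \<le> n" "j \<le> n" "k \<le> n"
  shows "opeq N n (opmul N n (ovl2 N n F (rr u v) i j) (ovl1 N n F A k))
                  (opmul N n (ovl1 N n F A k) (ovl2 N n F (rr u v) i j))"
proof -
  interpret tensor_symmetry_matrix N n F A
    by unfold_locales (rule F)
  have n: "3 \<le> n"
    using pos dist le by auto
  have "lifted_compatible (rr u v)"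
    using rcases
  proof (elim disjE exE conjE)
    fix R
    assume "rr = (\<lambda>u v. opsmul (1 / (u - v)) F)"
    then show ?thesis
      using n by (simp add: lifted_compatible_opsmul lifted_compatible_F)
  next
    fix Rq rm and e :: real
    assume e: "e > 0"
      and Hecke_compat: "\<forall>q\<in>ball 1 e - {-1, 0, 1}. hecke_symmetry N q (Rq q) \<and> compatible N (Rq q) F"
      and R1: "opeq N 2 (Rq 1) F"
      and expansion: "\<forall>a\<in>midx N 2. \<forall>b\<in>midx N 2.
        (\<lambda>h::complex. opmul N 2 (Rq (exp h)) F a b - (opid N 2 a b + h * rm a b)) \<in> O[at 0](\<lambda>h. h ^ 2)"
      and rr: "rr = (\<lambda>u v. opadd (opsmul (u / (u - v)) F) (opsmul (- 1 / 2) rm))"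
    have "\<forall>q\<in>ball 1 e - {-1, 0, 1}. compatible N (Rq q) F"
      using Hecke_compat by blast
    then show ?thesis
      unfolding rr by (rule trigonometric_r_lifted_compatible[OF n e _ R1 expansion])
  qed
  then show ?thesis
    using ovl2_ovl1_commute pos dist le by (simp add: opeq_def)
qed

end
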